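(* Let $(\mathcal C,\otimes,\mathbb I)$ be a monoidal category with pushouts and $(H,\Delta,\varepsilon)$ a coalgebra in $\mathcal C$. The induction functor $\mathsf{Ind}:\mathsf{Cov}^H\to\mathsf{PCom}^H$ restricts to a faithful functor $\mathsf{Ind}:\mathsf{Cov}^H_{pr}\to\mathsf{PCom}^H$, where $\mathsf{Cov}^H_{pr}$ is the full subcategory of proper covers.
   Context: $\mathcal C$ is treated as strict monoidal; the identity of an object $X$ is also written $X$. $\mathsf{Com}^H$ is the category of right $H$-comodules $(Y,\delta)$. A partial comodule datum is $(X,X\bullet H,\pi_X,\rho_X)$ with $\rho_X:X\to X\bullet H$ and $\pi_X:X\otimes H\to X\bullet H$ an epimorphism. For such a datum let: $(X\bullet H)\bullet H$ be the pushout of $\pi_X$ and $\rho_X\otimes H$, with coprojections $\rho_X\bullet H$ and $\pi_{X\bullet H}$; $X\bullet(H\otimes H)$ the pushout of $\pi_X$ and $X\otimes\Delta$, with coprojections $X\bullet\Delta$ and $\pi_{X,\Delta}$; $X\bullet(H\bullet H)$ the pushout of $\pi_{X,\Delta}$ and $\pi_X\otimes H$, with coprojections $\pi'_X$ and $\pi'_{X,\Delta}$. A geometric partial $H$-comodule is a datum such that (GP1) there is $X\bullet\varepsilon:X\bullet H\to X$ with $(X\bullet\varepsilon)\circ\rho_X=\mathrm{id}_X$ and $(X\bullet\varepsilon)\circ\pi_X=X\otimes\varepsilon$; (GP2) there is an isomorphism $\theta:X\bullet(H\bullet H)\to(X\bullet H)\bullet H$ with $\theta\circ\pi'_{X,\Delta}=\pi_{X\bullet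 H}$ and $(\rho_X\bullet H)\circ\rho_X=\theta\circ\pi'_X\circ(X\bullet\Delta)\circ\rho_X$. Morphisms $X\to X'$ are pairs $(f,f\bullet H)$ with $\rho_{X'}\circ f=(f\bullet H)\circ\rho_X$ and $\pi_{X'}\circ(f\otimes H)=(f\bullet H)\circ\pi_X$; category $\mathsf{PCom}^H$. $\mathsf{Cov}^H$ has objects $(Y,X,p)$ with $(Y,\delta_Y)\in\mathsf{Com}^H$, $X\in\mathcal C$, $p:Y\to X$ an epimorphism in $\mathcal C$; morphisms $(F,f):(Y,X,p)\to(Y',X',p')$ consist of a comodule morphism $F$ and a morphism $f$ in $\mathcal C$ with $p'\circ F=f\circ p$. The functor $\mathsf{Ind}$ sends $(Y,X,p)$ to $(X,X\bullet H,\pi_X,\rho_X)$ where $X\bullet H$ with coprojections $\rho_X,\pi_X$ is the pushout of $p$ and $(p\otimes H)\circ\delta_Y$ (a geometric partial comodule), and sends $(F,f)$ to $(f,f\bullet H)$, $f\bullet H$ being the morphism induced by the pushout property. A cover $(Y,X,p)$ is proper if $(p\otimes H)\circ\delta_Y:Y\to X\otimes H$ is a monomorphism in $\mathsf{Com}^H$, where $X\otimes H$ carries the coaction $X\otimes\Delta$. *)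

theory Defs
  imports Main
begin

text \<open>A (small, possibly large-as-a-type) strict monoidal category, given by its data.
  Cmp g f is the composite g after f.  The identity of an object X is Idt X.\<close>

record ('o,'m) smcat =
  Obj  :: "'o set"
  Arr  :: "'m set"
  Dom  :: "'m \<Rightarrow> 'o"
  Cod  :: "'m \<Rightarrow> 'o"
  Cmp  :: "'m \<Rightarrow> 'm \<Rightarrow> 'm"
  Idt  :: "'o \<Rightarrow> 'm"
  TenO :: "'o \<Rightarrow> 'o \<Rightarrow> 'o"
  TenA :: "'m \<Rightarrow> 'm \<Rightarrow> 'm"
  Unit :: "'o"

definition hom :: "('o,'m) smcat \<Rightarrow> 'm \<Rightarrow> 'o \<Rightarrow> 'o \<Rightarrow> bool" where
  "hom C f a b \<longleftrightarrow> f \<in> Arr C \<and> Dom C f = a \<and> Cod C f = b"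

definition is_category :: "('o,'m) smcat \<Rightarrow> bool" where
  "is_category C \<longleftrightarrow>
     (\<forall>f\<in>Arr C. Dom C f \<in> Obj C \<and> Cod C f \<in> Obj C) \<and>
     (\<forall>a\<in>Obj C. hom C (Idt C a) a a) \<and>
     (\<forall>f g a b c. hom C f a b \<longrightarrow> hom C g b c \<longrightarrow> hom C (Cmp C g f) a c) \<and>
     (\<forall>f g h. f \<in> Arr C \<longrightarrow> g \<in> Arr C \<longrightarrow> h \<in> Arr C \<longrightarrow>
        Cod C f = Dom C g \<longrightarrow> Cod C g = Dom C h \<longrightarrow>
        Cmp C h (Cmp C g f) = Cmp C (Cmp C h g) f) \<and>
     (\<forall>f\<in>Arr C. Cmp C (Idt C (Cod C f)) f = f \<and> Cmp C f (Idt C (Dom C f)) = f)"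

definition strict_monoidal_category :: "('o,'m) smcat \<Rightarrow> bool" where
  "strict_monoidal_category C \<longleftrightarrow> is_category C \<and>
     Unit C \<in> Obj C \<and>
     (\<forall>a\<in>Obj C. \<forall>b\<in>Obj C. TenO C a b \<in> Obj C) \<and>
     (\<forall>f\<in>Arr C. \<forall>g\<in>Arr C. hom C (TenA C f g) (TenO C (Dom C f) (Dom C g))
                                            (TenO C (Cod C f) (Cod C g))) \<and>
     (\<forall>a\<in>Obj C. \<forall>b\<in>Obj C. TenA C (Idt C a) (Idt C b) = Idt C (TenO C a b)) \<and>
     (\<forall>f g f' g'. f \<in> Arr C \<longrightarrow> g \<in> Arr C \<longrightarrow> f' \<in> Arr C \<longrightarrow> g' \<in> Arr C \<longrightarrow>
        Cod C f = Dom C g \<longrightarrow> Cod C f' = Dom C g' \<longrightarrow>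
        TenA C (Cmp C g f) (Cmp C g' f') = Cmp C (TenA C g g') (TenA C f f')) \<and>
     (\<forall>a\<in>Obj C. \<forall>b\<in>Obj C. \<forall>c\<in>Obj C. TenO C (TenO C a b) c = TenO C a (TenO C b c)) \<and>
     (\<forall>f\<in>Arr C. \<forall>g\<in>Arr C. \<forall>h\<in>Arr C. TenA C (TenA C f g) h = TenA C f (TenA C g h)) \<and>
     (\<forall>a\<in>Obj C. TenO C (Unit C) a = a \<and> TenO C a (Unit C) = a) \<and>
     (\<forall>f\<in>Arr C. TenA C (Idt C (Unit C)) f = f \<and> TenA C f (Idt C (Unit C)) = f)"

definition epi :: "('o,'m) smcat \<Rightarrow> 'm \<Rightarrow> bool" where
  "epi C e \<longleftrightarrow> e \<in> Arr C \<and>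
     (\<forall>u v. u \<in> Arr C \<longrightarrow> v \<in> Arr C \<longrightarrow> Dom C u = Cod C e \<longrightarrow> Dom C v = Cod C e \<longrightarrow>
        Cod C u = Cod C v \<longrightarrow> Cmp C u e = Cmp C v e \<longrightarrow> u = v)"

definition is_pushout :: "('o,'m) smcat \<Rightarrow> 'm \<Rightarrow> 'm \<Rightarrow> 'o \<Rightarrow> 'm \<Rightarrow> 'm \<Rightarrow> bool" where
  "is_pushout C f g P i j \<longleftrightarrow>
     f \<in> Arr C \<and> g \<in> Arr C \<and> Dom C f = Dom C g \<and>
     hom C i (Cod C f) P \<and> hom C j (Cod C g) P \<and> Cmp C i f = Cmp C j g \<and>
     (\<forall>Q k l. hom C k (Cod C f) Q \<longrightarrow> hom C l (Cod C g) Q \<longrightarrow> Cmp C k f = Cmp C l g \<longrightarrow>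
        (\<exists>!u. hom C u P Q \<and> Cmp C u i = k \<and> Cmp C u j = l))"

definition has_pushouts :: "('o,'m) smcat \<Rightarrow> bool" where
  "has_pushouts C \<longleftrightarrow>
     (\<forall>f g. f \<in> Arr C \<longrightarrow> g \<in> Arr C \<longrightarrow> Dom C f = Dom C g \<longrightarrow>
        (\<exists>P i j. is_pushout C f g P i j))"

definition coalgebra :: "('o,'m) smcat \<Rightarrow> 'o \<Rightarrow> 'm \<Rightarrow> 'm \<Rightarrow> bool" where
  "coalgebra C H \<Delta> \<epsilon> \<longleftrightarrow> H \<in> Obj C \<and>
     hom C \<Delta> H (TenO C H H) \<and> hom C \<epsilon> H (Unit C) \<and>
     Cmp C (TenA C \<Delta> (Idt C H)) \<Delta> = Cmp C (TenA C (Idt C H) \<Delta>) \<Delta> \<and>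
     Cmp C (TenA C \<epsilon> (Idt C H)) \<Delta> = Idt C H \<and>
     Cmp C (TenA C (Idt C H) \<epsilon>) \<Delta> = Idt C H"

definition comodule :: "('o,'m) smcat \<Rightarrow> 'o \<Rightarrow> 'm \<Rightarrow> 'm \<Rightarrow> 'o \<Rightarrow> 'm \<Rightarrow> bool" where
  "comodule C H \<Delta> \<epsilon> Y \<delta> \<longleftrightarrow> Y \<in> Obj C \<and> hom C \<delta> Y (TenO C Y H) \<and>
     Cmp C (TenA C \<delta> (Idt C H)) \<delta> = Cmp C (TenA C (Idt C Y) \<Delta>) \<delta> \<and>
     Cmp C (TenA C (Idt C Y) \<epsilon>) \<delta> = Idt C Y"

definition comodule_hom ::
  "('o,'m) smcat \<Rightarrow> 'o \<Rightarrow> 'o \<Rightarrow> 'm \<Rightarrow> 'o \<Rightarrow> 'm \<Rightarrow> 'm \<Rightarrow> bool" where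
  "comodule_hom C H Y \<delta> Y' \<delta>' F \<longleftrightarrow> hom C F Y Y' \<and>
     Cmp C \<delta>' F = Cmp C (TenA C F (Idt C H)) \<delta>"

definition comodule_mono ::
  "('o,'m) smcat \<Rightarrow> 'o \<Rightarrow> 'm \<Rightarrow> 'm \<Rightarrow> 'o \<Rightarrow> 'm \<Rightarrow> 'o \<Rightarrow> 'm \<Rightarrow> 'm \<Rightarrow> bool" where
  "comodule_mono C H \<Delta> \<epsilon> Y \<delta> Z \<delta>Z m \<longleftrightarrow> comodule_hom C H Y \<delta> Z \<delta>Z m \<and>
     (\<forall>W \<delta>W a b. comodule C H \<Delta> \<epsilon> W \<delta>W \<longrightarrow>
        comodule_hom C H W \<delta>W Y \<delta> a \<longrightarrow> comodule_hom C H W \<delta>W Y \<delta> b \<longrightarrow>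
        Cmp C m a = Cmp C m b \<longrightarrow> a = b)"

definition cover :: "('o,'m) smcat \<Rightarrow> 'o \<Rightarrow> 'm \<Rightarrow> 'm \<Rightarrow> 'o \<Rightarrow> 'm \<Rightarrow> 'o \<Rightarrow> 'm \<Rightarrow> bool" where
  "cover C H \<Delta> \<epsilon> Y \<delta> X p \<longleftrightarrow> comodule C H \<Delta> \<epsilon> Y \<delta> \<and> X \<in> Obj C \<and> hom C p Y X \<and> epi C p"

definition proper_cover ::
  "('o,'m) smcat \<Rightarrow> 'o \<Rightarrow> 'm \<Rightarrow> 'm \<Rightarrow> 'o \<Rightarrow> 'm \<Rightarrow> 'o \<Rightarrow> 'm \<Rightarrow> bool" where
  "proper_cover C H \<Delta> \<epsilon> Y \<delta> X p \<longleftrightarrow> cover C H \<Delta> \<epsilon> Y \<delta> X p \<and>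
     comodule_mono C H \<Delta> \<epsilon> Y \<delta> (TenO C X H) (TenA C (Idt C X) \<Delta>)
       (Cmp C (TenA C p (Idt C H)) \<delta>)"

definition cover_hom ::
  "('o,'m) smcat \<Rightarrow> 'o \<Rightarrow> 'o \<Rightarrow> 'm \<Rightarrow> 'o \<Rightarrow> 'm \<Rightarrow> 'o \<Rightarrow> 'm \<Rightarrow> 'o \<Rightarrow> 'm \<Rightarrow> 'm \<Rightarrow> 'm \<Rightarrow> bool" where
  "cover_hom C H Y \<delta> X p Y' \<delta>' X' p' F f \<longleftrightarrow>
     comodule_hom C H Y \<delta> Y' \<delta>' F \<and> hom C f X X' \<and> Cmp C p' F = Cmp C f p"

text \<open>Object part of Ind: (XH, \<rho>, \<pi>) is a pushout of p and (p \<otimes> H) \<circ> \<delta>, with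
  \<rho> : X \<rightarrow> XH and \<pi> : X \<otimes> H \<rightarrow> XH (any choice of pushout).\<close>
definition ind_obj ::
  "('o,'m) smcat \<Rightarrow> 'o \<Rightarrow> 'm \<Rightarrow> 'm \<Rightarrow> 'o \<Rightarrow> 'm \<Rightarrow> 'o \<Rightarrow> 'm \<Rightarrow> 'o \<Rightarrow> 'm \<Rightarrow> 'm \<Rightarrow> bool" where
  "ind_obj C H \<Delta> \<epsilon> Y \<delta> X p XH \<rho> \<pi> \<longleftrightarrow>
     is_pushout C p (Cmp C (TenA C p (Idt C H)) \<delta>) XH \<rho> \<pi>"

text \<open>Morphism part of Ind: Ind(F,f) = (f, fH), where fH : XH \<rightarrow> XH' is the morphism
  induced by the pushout property, i.e. the (unique) morphism with
  fH \<circ> \<rho> = \<rho>' \<circ> f and fH \<circ> \<pi> = \<pi>' \<circ> (f \<otimes> H).\<close>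
definition ind_hom ::
  "('o,'m) smcat \<Rightarrow> 'o \<Rightarrow> 'o \<Rightarrow> 'm \<Rightarrow> 'm \<Rightarrow> 'o \<Rightarrow> 'm \<Rightarrow> 'm \<Rightarrow> 'm \<Rightarrow> 'm \<Rightarrow> bool" where
  "ind_hom C H XH \<rho> \<pi> XH' \<rho>' \<pi>' f fH \<longleftrightarrow>
     hom C fH XH XH' \<and> Cmp C fH \<rho> = Cmp C \<rho>' f \<and>
     Cmp C fH \<pi> = Cmp C \<pi>' (TenA C f (Idt C H))"

end

theory Submission
  imports Defs
begin

text \<open>Ind sends (F, f) to a pair whose first component is f, so Ind(F, f) = Ind(G, g) forces
  f = g.  For a cover morphism, (p' \<otimes> H) \<circ> \<delta>' \<circ> F = (f \<circ> p \<otimes> H) \<circ> \<delta> by colinearity of F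
  and p' \<circ> F = f \<circ> p; hence F and G agree after composition with (p' \<otimes> H) \<circ> \<delta>', which is
  a monomorphism of comodules when the target cover is proper.\<close>

lemma category_comp_assoc:
  assumes "is_category C" and "hom C f a b" and "hom C g b c" and "hom C h c d"
  shows "Cmp C h (Cmp C g f) = Cmp C (Cmp C h g) f"
proof -
  have "f \<in> Arr C" "g \<in> Arr C" "h \<in> Arr C" "Cod C f = Dom C g" "Cod C g = Dom C h"
    using assms(2-4) unfolding hom_def by auto
  with assms(1) show ?thesis unfolding is_category_def by blast
qed

lemma category_Idt_comp_Idt:
  assumes "is_category C" and "a \<in> Obj C"
  shows "Cmp C (Idt C a) (Idt C a) = Idt C a"
  using assms unfolding is_category_def hom_def by metis

lemma smc_is_category: "strict_monoidal_category C \<Longrightarrow> is_category C"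
  unfolding strict_monoidal_category_def by blast

lemma smc_Idt_hom:
  assumes "strict_monoidal_category C" and "a \<in> Obj C"
  shows "hom C (Idt C a) a a"
  using assms smc_is_category unfolding is_category_def by blast

lemma smc_TenA_hom:
  assumes "strict_monoidal_category C" and "hom C f a b" and "hom C g c d"
  shows "hom C (TenA C f g) (TenO C a c) (TenO C b d)"
proof -
  have "f \<in> Arr C" "g \<in> Arr C" using assms(2,3) unfolding hom_def by auto
  with assms(1) have "hom C (TenA C f g) (TenO C (Dom C f) (Dom C g)) (TenO C (Cod C f) (Cod C g))"
    unfolding strict_monoidal_category_def by blast
  with assms(2,3) show ?thesis unfolding hom_def by auto
qed

lemma smc_TenA_interchange:
  assumes "strict_monoidal_category C"
    and "hom C f a b" and "hom C g b c" and "hom C f' a' b'" and "hom C g' b' c'"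
  shows "TenA C (Cmp C g f) (Cmp C g' f') = Cmp C (TenA C g g') (TenA C f f')"
proof -
  have "f \<in> Arr C" "g \<in> Arr C" "f' \<in> Arr C" "g' \<in> Arr C"
    and "Cod C f = Dom C g" "Cod C f' = Dom C g'"
    using assms(2-5) unfolding hom_def by auto
  with assms(1) show ?thesis unfolding strict_monoidal_category_def by blast
qed

lemma cover_hom_comp_coaction_projection:
  assumes smc: "strict_monoidal_category C" and H: "H \<in> Obj C"
    and cov: "cover C H \<Delta> \<epsilon> Y \<delta> X p" and cov': "cover C H \<Delta> \<epsilon> Y' \<delta>' X' p'"
    and Ff: "cover_hom C H Y \<delta> X p Y' \<delta>' X' p' F f"
  shows "Cmp C (Cmp C (TenA C p' (Idt C H)) \<delta>') F = Cmp C (TenA C (Cmp C f p) (Idt C H)) \<delta>"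
proof -
  have cat: "is_category C" using smc by (rule smc_is_category)
  have idH: "hom C (Idt C H) H H" using smc H by (rule smc_Idt_hom)
  have \<delta>: "hom C \<delta> Y (TenO C Y H)" and p: "hom C p Y X"
    using cov unfolding cover_def comodule_def by auto
  have \<delta>': "hom C \<delta>' Y' (TenO C Y' H)" and p': "hom C p' Y' X'"
    using cov' unfolding cover_def comodule_def by auto
  have F: "hom C F Y Y'" and colin: "Cmp C \<delta>' F = Cmp C (TenA C F (Idt C H)) \<delta>"
    and square: "Cmp C p' F = Cmp C f p"
    using Ff unfolding cover_hom_def comodule_hom_def by auto
  have p'H: "hom C (TenA C p' (Idt C H)) (TenO C Y' H) (TenO C X' H)"
    using smc p' idH by (rule smc_TenA_hom)
  have FH: "hom C (TenA C F (Idt C H)) (TenO C Y H) (TenO C Y' H)"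
    using smc F idH by (rule smc_TenA_hom)
  have "Cmp C (Cmp C (TenA C p' (Idt C H)) \<delta>') F = Cmp C (TenA C p' (Idt C H)) (Cmp C \<delta>' F)"
    using category_comp_assoc[OF cat F \<delta>' p'H] by simp
  also have "\<dots> = Cmp C (TenA C p' (Idt C H)) (Cmp C (TenA C F (Idt C H)) \<delta>)"
    using colin by simp
  also have "\<dots> = Cmp C (Cmp C (TenA C p' (Idt C H)) (TenA C F (Idt C H))) \<delta>"
    using category_comp_assoc[OF cat \<delta> FH p'H] .
  also have "Cmp C (TenA C p' (Idt C H)) (TenA C F (Idt C H))
      = TenA C (Cmp C p' F) (Cmp C (Idt C H) (Idt C H))"
    using smc_TenA_interchange[OF smc F p' idH idH] by simp
  finally show ?thesis
    using square category_Idt_comp_Idt[OF cat H] by simp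
qed

lemma cover_hom_into_proper_unique:
  assumes smc: "strict_monoidal_category C" and H: "H \<in> Obj C"
    and cov: "cover C H \<Delta> \<epsilon> Y \<delta> X p" and proper: "proper_cover C H \<Delta> \<epsilon> Y' \<delta>' X' p'"
    and Ff: "cover_hom C H Y \<delta> X p Y' \<delta>' X' p' F f"
    and Gf: "cover_hom C H Y \<delta> X p Y' \<delta>' X' p' G f"
  shows "F = G"
proof -
  have cov': "cover C H \<Delta> \<epsilon> Y' \<delta>' X' p'"
    and mono: "comodule_mono C H \<Delta> \<epsilon> Y' \<delta>' (TenO C X' H) (TenA C (Idt C X') \<Delta>)
                 (Cmp C (TenA C p' (Idt C H)) \<delta>')"
    using proper unfolding proper_cover_def by auto
  have "comodule C H \<Delta> \<epsilon> Y \<delta>" using cov unfolding cover_def by blast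
  moreover have "comodule_hom C H Y \<delta> Y' \<delta>' F" and "comodule_hom C H Y \<delta> Y' \<delta>' G"
    using Ff Gf unfolding cover_hom_def by auto
  moreover have "Cmp C (Cmp C (TenA C p' (Idt C H)) \<delta>') F = Cmp C (Cmp C (TenA C p' (Idt C H)) \<delta>') G"
    using cover_hom_comp_coaction_projection[OF smc H cov cov'] Ff Gf by simp
  ultimately show "F = G" using mono unfolding comodule_mono_def by metis
qed

theorem corollary2p13:
  assumes "strict_monoidal_category C" and "has_pushouts C"
    and "coalgebra C H \<Delta> \<epsilon>"
    and "proper_cover C H \<Delta> \<epsilon> Y \<delta> X p"
    and "proper_cover C H \<Delta> \<epsilon> Y' \<delta>' X' p'"
    and "ind_obj C H \<Delta> \<epsilon> Y \<delta> X p XH \<rho> \<pi>"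
    and "ind_obj C H \<Delta> \<epsilon> Y' \<delta>' X' p' XH' \<rho>' \<pi>'"
    and "cover_hom C H Y \<delta> X p Y' \<delta>' X' p' F f"
    and "cover_hom C H Y \<delta> X p Y' \<delta>' X' p' G g"
    and "ind_hom C H XH \<rho> \<pi> XH' \<rho>' \<pi>' f fH"
    and "ind_hom C H XH \<rho> \<pi> XH' \<rho>' \<pi>' g gH"
    and "(f, fH) = (g, gH)"
  shows "(F, f) = (G, g)"
proof -
  have "f = g" using assms(12) by simp
  have "H \<in> Obj C" using assms(3) unfolding coalgebra_def by blast
  moreover have "cover C H \<Delta> \<epsilon> Y \<delta> X p" using assms(4) unfolding proper_cover_def by blast
  ultimately have "F = G"
    using cover_hom_into_proper_unique[OF assms(1) _ _ assms(5) assms(8)] assms(9) \<open>f = g\<close>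
    by blast
  with \<open>f = g\<close> show ?thesis by simp
qed

end
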